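(* Consider the online asynchronous testing setting with conflict sets described in the context. Suppose that the null $p$-values are super-uniform conditional on the non-conflicting information available at their decision time, i.e. for every $t\in\mathcal{H}^0$ and every $u\in[0,1]$, $\mathbb{P}(P_t\le u\mid \mathcal{F}^{-\mathcal{X}^{E_t}})\le u$. Then any LORD* procedure and any SAFFRON* procedure with target level $\alpha$ (where $\mathcal{F}$ denotes the LORD* filtration for LORD* and the SAFFRON* filtration for SAFFRON* ) guarantee $\mathrm{mFDR}(t)\le\alpha$ for all $t\in\mathbb{N}$.
   Context: Hypotheses $H_1,H_2,\dots$ are tested; the test of $H_t$ starts at step $t$, is run at a test level $\alpha_t\ge 0$ (and, for SAFFRON*-type procedures, uses a candidacy threshold $\lambda_t$ with $\alpha_t\le\lambda_t<1$), and produces a $p$-value $P_t$. $\mathcal{H}^0\subseteq\mathbb{N}$ is the fixed (unknown) set of indices of true null hypotheses. Each test $t$ has a fixed (deterministic) decision time $E_t\in\mathbb{N}$ with $E_t\ge t$. Let $R_t=\mathbf{1}\{P_t\le\alpha_t\}$ and $C_t=\mathbf{1}\{P_t\le\lambda_t\}$. Let $\{L_t\}$ be a fixed sequence of nonnegative integer lags with $L_{t+1}\le L_t+1$. The conflict set of test $t$ is $\mathcal{X}^t=\{i\in[t-1]:E_i\ge t\}\cup\big(\{t-L_t,\dots,t-1\}\cap[t-1]\big)$. The non-conflicting $\sigma$-algebras are $\mathcal{L}^{-\mathcal{X}^t}=\sigma(R_i: i\le t-1,\ i\notin\mathcal{X}^t)$ (LORD* filtration) and $\mathcal{S}^{-\mathcal{X}^t}=\sigma(R_i,C_i: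 i\le t-1,\ i\notin\mathcal{X}^t)$ (SAFFRON* filtration); $\mathcal{F}^{-\mathcal{X}^t}$ denotes the relevant one. The set of rejections by time $t$ is $\mathcal{R}(t)=\{i\in[t]: E_i\le t,\ P_i\le\alpha_i\}$ and $\mathcal{V}(t)=\mathcal{R}(t)\cap\mathcal{H}^0$; $\mathrm{mFDR}(t)=\mathbb{E}|\mathcal{V}(t)|/\mathbb{E}[|\mathcal{R}(t)|\vee 1]$. A LORD* procedure is any rule choosing each $\alpha_t\ge0$ to be $\mathcal{L}^{-\mathcal{X}^t}$-measurable such that, for all $t\in\mathbb{N}$, $\sum_{j\le t}\alpha_j\le \alpha\big((\sum_{j<t,\,j\notin\mathcal{X}^t}R_j)\vee1\big)$. A SAFFRON* procedure is any rule choosing $\alpha_t,\lambda_t$ (with $0\le\alpha_t\le\lambda_t<1$) to be $\mathcal{S}^{-\mathcal{X}^t}$-measurable such that, for all $t\in\mathbb{N}$, $\sum_{j<t,\,j\notin\mathcal{X}^t}\frac{\alpha_j}{1-\lambda_j}\mathbf{1}\{P_j>\lambda_j\}+\sum_{j\in\mathcal{X}^t\cup\{t\}}\frac{\alpha_j}{1-\lambda_j}\le\alpha\big((\sum_{j<t,\,j\notin\mathcal{X}^t}R_j)\vee1\big)$. *)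

theory Defs
  imports "HOL-Probability.Probability"
begin

text \<open>Online asynchronous testing with conflict sets. Tests are indexed by t = 1, 2, ...;
  index 0 is never used.\<close>

definition Rej :: "(nat \<Rightarrow> 'a \<Rightarrow> real) \<Rightarrow> (nat \<Rightarrow> 'a \<Rightarrow> real) \<Rightarrow> nat \<Rightarrow> 'a \<Rightarrow> real" where
  "Rej P al i \<omega> = (if P i \<omega> \<le> al i \<omega> then 1 else 0)"

definition Cand :: "(nat \<Rightarrow> 'a \<Rightarrow> real) \<Rightarrow> (nat \<Rightarrow> 'a \<Rightarrow> real) \<Rightarrow> nat \<Rightarrow> 'a \<Rightarrow> real" where
  "Cand P lam i \<omega> = (if P i \<omega> \<le> lam i \<omega> then 1 else 0)"

definition conflict :: "(nat \<Rightarrow> nat) \<Rightarrow> (nat \<Rightarrow> nat) \<Rightarrow> nat \<Rightarrow> nat set" where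
  "conflict E L t = {i. 1 \<le> i \<and> i \<le> t - 1 \<and> t \<le> E i}
                  \<union> ({i. t - L t \<le> i \<and> i \<le> t - 1} \<inter> {1..t - 1})"

definition nonconf :: "(nat \<Rightarrow> nat) \<Rightarrow> (nat \<Rightarrow> nat) \<Rightarrow> nat \<Rightarrow> nat set" where
  "nonconf E L t = {i. 1 \<le> i \<and> i \<le> t - 1 \<and> i \<notin> conflict E L t}"

definition gen_sigma :: "'a set \<Rightarrow> ('a \<Rightarrow> real) set \<Rightarrow> 'a measure" where
  "gen_sigma \<Omega> Fs = sigma \<Omega> {f -` A \<inter> \<Omega> | f A. f \<in> Fs \<and> A \<in> sets (borel :: real measure)}"

definition lord_filt :: "'a measure \<Rightarrow> (nat \<Rightarrow> 'a \<Rightarrow> real) \<Rightarrow> (nat \<Rightarrow> 'a \<Rightarrow> real)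
    \<Rightarrow> (nat \<Rightarrow> nat) \<Rightarrow> (nat \<Rightarrow> nat) \<Rightarrow> nat \<Rightarrow> 'a measure" where
  "lord_filt M P al E L t = gen_sigma (space M) ((\<lambda>i. Rej P al i) ` nonconf E L t)"

definition saffron_filt :: "'a measure \<Rightarrow> (nat \<Rightarrow> 'a \<Rightarrow> real) \<Rightarrow> (nat \<Rightarrow> 'a \<Rightarrow> real)
    \<Rightarrow> (nat \<Rightarrow> 'a \<Rightarrow> real) \<Rightarrow> (nat \<Rightarrow> nat) \<Rightarrow> (nat \<Rightarrow> nat) \<Rightarrow> nat \<Rightarrow> 'a measure" where
  "saffron_filt M P al lam E L t = gen_sigma (space M)
      ((\<lambda>i. Rej P al i) ` nonconf E L t \<union> (\<lambda>i. Cand P lam i) ` nonconf E L t)"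

definition is_LORD_star :: "'a measure \<Rightarrow> real \<Rightarrow> (nat \<Rightarrow> 'a \<Rightarrow> real) \<Rightarrow> (nat \<Rightarrow> 'a \<Rightarrow> real)
    \<Rightarrow> (nat \<Rightarrow> nat) \<Rightarrow> (nat \<Rightarrow> nat) \<Rightarrow> bool" where
  "is_LORD_star M a P al E L \<longleftrightarrow>
     (\<forall>t\<ge>1. al t \<in> borel_measurable (lord_filt M P al E L t)
         \<and> (\<forall>\<omega>\<in>space M. 0 \<le> al t \<omega>
             \<and> (\<Sum>j=1..t. al j \<omega>) \<le> a * max (\<Sum>j\<in>nonconf E L t. Rej P al j \<omega>) 1))"

definition is_SAFFRON_star :: "'a measure \<Rightarrow> real \<Rightarrow> (nat \<Rightarrow> 'a \<Rightarrow> real) \<Rightarrow> (nat \<Rightarrow> 'a \<Rightarrow> real)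
    \<Rightarrow> (nat \<Rightarrow> 'a \<Rightarrow> real) \<Rightarrow> (nat \<Rightarrow> nat) \<Rightarrow> (nat \<Rightarrow> nat) \<Rightarrow> bool" where
  "is_SAFFRON_star M a P al lam E L \<longleftrightarrow>
     (\<forall>t\<ge>1. al t \<in> borel_measurable (saffron_filt M P al lam E L t)
         \<and> lam t \<in> borel_measurable (saffron_filt M P al lam E L t)
         \<and> (\<forall>\<omega>\<in>space M. 0 \<le> al t \<omega> \<and> al t \<omega> \<le> lam t \<omega> \<and> lam t \<omega> < 1
             \<and> (\<Sum>j\<in>nonconf E L t. al j \<omega> / (1 - lam j \<omega>) * (if P j \<omega> > lam j \<omega> then 1 else 0))
               + (\<Sum>j\<in>conflict E L t \<union> {t}. al j \<omega> / (1 - lam j \<omega>))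
               \<le> a * max (\<Sum>j\<in>nonconf E L t. Rej P al j \<omega>) 1))"

definition rejset :: "(nat \<Rightarrow> 'a \<Rightarrow> real) \<Rightarrow> (nat \<Rightarrow> 'a \<Rightarrow> real) \<Rightarrow> (nat \<Rightarrow> nat) \<Rightarrow> nat \<Rightarrow> 'a \<Rightarrow> nat set" where
  "rejset P al E t \<omega> = {i \<in> {1..t}. E i \<le> t \<and> P i \<omega> \<le> al i \<omega>}"

definition mFDR :: "'a measure \<Rightarrow> nat set \<Rightarrow> (nat \<Rightarrow> 'a \<Rightarrow> real) \<Rightarrow> (nat \<Rightarrow> 'a \<Rightarrow> real)
    \<Rightarrow> (nat \<Rightarrow> nat) \<Rightarrow> nat \<Rightarrow> real" where
  "mFDR M H0 P al E t =
     (\<integral>\<omega>. real (card (rejset P al E t \<omega> \<inter> H0)) \<partial>M)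
     / (\<integral>\<omega>. max (real (card (rejset P al E t \<omega>))) 1 \<partial>M)"

definition cond_superuniform :: "'a measure \<Rightarrow> nat set \<Rightarrow> (nat \<Rightarrow> 'a \<Rightarrow> real)
    \<Rightarrow> (nat \<Rightarrow> nat) \<Rightarrow> (nat \<Rightarrow> 'a measure) \<Rightarrow> bool" where
  "cond_superuniform M H0 P E F \<longleftrightarrow>
     (\<forall>t\<in>H0. t \<ge> 1 \<longrightarrow> (\<forall>u\<in>{0..1::real}.
        AE \<omega> in M. real_cond_exp M (F (E t)) (indicator {x \<in> space M. P t x \<le> u}) \<omega> \<le> u))"

end

theory Submission
  imports Defs
begin

text \<open>The level al t (and lam t) is measurable with respect to the non-conflicting
  sigma-algebra at time t, and the lag condition L (t+1) <= L t + 1 makes these sigma-algebras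
  increase in t, so al t is measurable at the decision time E t. Rounding al t up to a finite
  grid turns fixed-level conditional super-uniformity of a null P t into P(P t <= al t) <= E[al t];
  for SAFFRON* the same bound at the levels al t and lam t gives
  P(P t <= al t) <= E[al t / (1 - lam t) 1{P t > lam t}]. Summing over the nulls in R(t) and
  bounding the summed wealth pointwise by the defining constraint at time t, whose
  non-conflicting rejections all belong to R(t), gives E|V(t)| <= a E[|R(t)| max 1].\<close>

section \<open>Super-uniformity at random thresholds\<close>

lemma (in finite_measure) integrable_bounded:
  fixes f :: "'a \<Rightarrow> real"
  assumes "f \<in> borel_measurable M" and "\<And>x. x \<in> space M \<Longrightarrow> \<bar>f x\<bar> \<le> B"
  shows "integrable M f"
  using assms by (intro integrable_const_bound[where B = B] AE_I2) auto

lemma ceiling_grid_bounds: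
  fixes x n :: real
  assumes "0 < n"
  shows "x \<le> of_int \<lceil>n * x\<rceil> / n" and "of_int \<lceil>n * x\<rceil> / n \<le> x + 1 / n"
  using assms by (auto simp: field_simps) linarith+

locale superuniform_pvalue = prob_space M + finite_measure_subalgebra M F
  for M F :: "'a measure" +
  fixes X :: "'a \<Rightarrow> real"
  assumes measurable_X [measurable]: "X \<in> borel_measurable M"
    and superuniform:
      "u \<in> {0..1} \<Longrightarrow> AE \<omega> in M. real_cond_exp M F (indicator {x \<in> space M. X x \<le> u}) \<omega> \<le> u"
begin

lemma measurable_from_F: "f \<in> borel_measurable F \<Longrightarrow> f \<in> borel_measurable M"
  using measurable_from_subalg[OF subalg] .

lemma integral_mult_indicator_le_const:
  assumes [measurable]: "f \<in> borel_measurable F"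
    and f: "\<And>\<omega>. \<omega> \<in> space M \<Longrightarrow> 0 \<le> f \<omega> \<and> f \<omega> \<le> B" and "0 \<le> u"
  shows "(\<integral>\<omega>. f \<omega> * indicator {x \<in> space M. X x \<le> u} \<omega> \<partial>M) \<le> (\<integral>\<omega>. f \<omega> * u \<partial>M)"
proof -
  have [measurable]: "f \<in> borel_measurable M" by (rule measurable_from_F) fact
  have int_f: "integrable M f"
    by (rule integrable_bounded[where B = B]) (use f in auto)
  have int_f_ind: "integrable M (\<lambda>\<omega>. f \<omega> * indicator {x \<in> space M. X x \<le> u} \<omega>)"
    using int_f by (rule integrable_real_mult_indicator[rotated]) measurable
  show ?thesis
  proof (cases "u \<le> 1")
    case True
    note cond_exp = real_cond_exp_intg[OF int_f_ind, simplified]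
    have "(\<integral>\<omega>. f \<omega> * indicator {x \<in> space M. X x \<le> u} \<omega> \<partial>M)
        = (\<integral>\<omega>. f \<omega> * real_cond_exp M F (indicator {x \<in> space M. X x \<le> u}) \<omega> \<partial>M)"
      using cond_exp(2) by simp
    also have "\<dots> \<le> (\<integral>\<omega>. f \<omega> * u \<partial>M)"
    proof (rule integral_mono_AE[OF cond_exp(1)])
      show "integrable M (\<lambda>\<omega>. f \<omega> * u)" using int_f by simp
      have "AE \<omega> in M. real_cond_exp M F (indicator {x \<in> space M. X x \<le> u}) \<omega> \<le> u"
        using superuniform True \<open>0 \<le> u\<close> by simp
      then show "AE \<omega> in M. f \<omega> * real_cond_exp M F (indicator {x \<in> space M. X x \<le> u}) \<omega> \<le> f \<omega> * u"
        using AE_space by eventually_elim (use f in \<open>auto intro: mult_left_mono\<close>)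
    qed
    finally show ?thesis .
  next
    case False
    show ?thesis
    proof (rule integral_mono[OF int_f_ind])
      show "integrable M (\<lambda>\<omega>. f \<omega> * u)" using int_f by simp
      fix \<omega> assume "\<omega> \<in> space M"
      with f[OF this] False show "f \<omega> * indicator {x \<in> space M. X x \<le> u} \<omega> \<le> f \<omega> * u"
        by (auto simp: indicator_def mult_le_cancel_left1)
    qed
  qed
qed

lemma integral_mult_indicator_le_finite_valued:
  assumes [measurable]: "g \<in> borel_measurable F" "h \<in> borel_measurable F"
    and g: "\<And>\<omega>. \<omega> \<in> space M \<Longrightarrow> 0 \<le> g \<omega> \<and> g \<omega> \<le> B"
    and "finite V" and h: "\<And>\<omega>. \<omega> \<in> space M \<Longrightarrow> h \<omega> \<in> V" and V: "\<And>v. v \<in> V \<Longrightarrow> 0 \<le> v"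
  shows "(\<integral>\<omega>. g \<omega> * indicator {x \<in> space M. X x \<le> h x} \<omega> \<partial>M) \<le> (\<integral>\<omega>. g \<omega> * h \<omega> \<partial>M)"
proof -
  define f where "f v \<omega> = (if h \<omega> = v then g \<omega> else 0)" for v \<omega>
  have [measurable]: "f v \<in> borel_measurable F" for v
    unfolding f_def by measurable
  have [measurable]: "f v \<in> borel_measurable M" for v
    by (rule measurable_from_F) simp
  have f: "0 \<le> f v \<omega> \<and> f v \<omega> \<le> B" if "\<omega> \<in> space M" for v \<omega>
    using g[OF that] by (simp add: f_def)
  have sum_f: "(\<Sum>v\<in>V. f v \<omega> * k v) = g \<omega> * k (h \<omega>)" if "\<omega> \<in> space M" for \<omega> and k :: "real \<Rightarrow> real"
  proof -
    have "(\<Sum>v\<in>V. f v \<omega> * k v) = (\<Sum>v\<in>V. if h \<omega> = v then g \<omega> * k v else 0)"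
      by (rule sum.cong) (simp_all add: f_def)
    then show ?thesis using \<open>finite V\<close> h[OF that] by simp
  qed
  have int_f: "integrable M (f v)" for v
    by (rule integrable_bounded[where B = B]) (use f in auto)
  have int_f_ind: "integrable M (\<lambda>\<omega>. f v \<omega> * indicator {x \<in> space M. X x \<le> v} \<omega>)" for v
    using int_f by (rule integrable_real_mult_indicator[rotated]) measurable
  have "(\<integral>\<omega>. g \<omega> * indicator {x \<in> space M. X x \<le> h x} \<omega> \<partial>M)
      = (\<integral>\<omega>. (\<Sum>v\<in>V. f v \<omega> * indicator {x \<in> space M. X x \<le> v} \<omega>) \<partial>M)"
    by (rule Bochner_Integration.integral_cong) (simp_all add: sum_f indicator_def)
  also have "\<dots> = (\<Sum>v\<in>V. \<integral>\<omega>. f v \<omega> * indicator {x \<in> space M. X x \<le> v} \<omega> \<partial>M)"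
    by (rule Bochner_Integration.integral_sum) (rule int_f_ind)
  also have "\<dots> \<le> (\<Sum>v\<in>V. \<integral>\<omega>. f v \<omega> * v \<partial>M)"
    using f V by (intro sum_mono integral_mult_indicator_le_const) auto
  also have "\<dots> = (\<integral>\<omega>. (\<Sum>v\<in>V. f v \<omega> * v) \<partial>M)"
    by (rule Bochner_Integration.integral_sum[symmetric]) (simp add: int_f)
  also have "\<dots> = (\<integral>\<omega>. g \<omega> * h \<omega> \<partial>M)"
    by (rule Bochner_Integration.integral_cong) (simp_all add: sum_f)
  finally show ?thesis .
qed

text \<open>Round h up to the grid of mesh 1/n, which takes only finitely many values on the range of h.\<close>

lemma integral_mult_indicator_le_add_divide:
  assumes [measurable]: "g \<in> borel_measurable F" "h \<in> borel_measurable F"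
    and g: "\<And>\<omega>. \<omega> \<in> space M \<Longrightarrow> 0 \<le> g \<omega> \<and> g \<omega> \<le> B"
    and h: "\<And>\<omega>. \<omega> \<in> space M \<Longrightarrow> 0 \<le> h \<omega> \<and> h \<omega> \<le> C" and "0 < n"
  shows "(\<integral>\<omega>. g \<omega> * indicator {x \<in> space M. X x \<le> h x} \<omega> \<partial>M) \<le> (\<integral>\<omega>. g \<omega> * h \<omega> \<partial>M) + B / n"
proof -
  define h' where "h' \<omega> = of_int \<lceil>n * h \<omega>\<rceil> / n" for \<omega>
  have [measurable]: "h' \<in> borel_measurable F"
    unfolding h'_def by measurable
  then have [measurable]: "g \<in> borel_measurable M" "h \<in> borel_measurable M" "h' \<in> borel_measurable M"
    by (auto intro: measurable_from_F)
  have h'_bounds: "h \<omega> \<le> h' \<omega>" "h' \<omega> \<le> h \<omega> + 1 / n" for \<omega>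
    using ceiling_grid_bounds[OF \<open>0 < n\<close>] unfolding h'_def by blast+
  have h'_grid: "h' \<omega> \<in> (\<lambda>j. of_int j / n) ` {0..\<lceil>n * C\<rceil>}" if "\<omega> \<in> space M" for \<omega>
  proof -
    have "0 \<le> n * h \<omega>" "n * h \<omega> \<le> n * C"
      using h[OF that] \<open>0 < n\<close> by (auto intro: mult_left_mono)
    then show ?thesis
      unfolding h'_def by (intro imageI) (auto intro: ceiling_mono)
  qed
  have int_g: "integrable M g"
    by (rule integrable_bounded[where B = B]) (use g in auto)
  have int_gh: "integrable M (\<lambda>\<omega>. g \<omega> * h \<omega>)"
  proof (rule integrable_bounded[where B = "B * C"])
    fix \<omega> assume "\<omega> \<in> space M"
    with g[OF this] h[OF this] show "\<bar>g \<omega> * h \<omega>\<bar> \<le> B * C"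
      by (auto simp: abs_mult intro!: mult_mono)
  qed simp
  have "(\<integral>\<omega>. g \<omega> * indicator {x \<in> space M. X x \<le> h x} \<omega> \<partial>M)
      \<le> (\<integral>\<omega>. g \<omega> * indicator {x \<in> space M. X x \<le> h' x} \<omega> \<partial>M)"
    using int_g g
    by (intro integral_mono integrable_real_mult_indicator)
      (auto simp: indicator_def dest: order_trans[OF _ h'_bounds(1)])
  also have "\<dots> \<le> (\<integral>\<omega>. g \<omega> * h' \<omega> \<partial>M)"
    using \<open>0 < n\<close> by (intro integral_mult_indicator_le_finite_valued[OF _ _ g _ h'_grid]) auto
  also have "\<dots> \<le> (\<integral>\<omega>. g \<omega> * h \<omega> + B / n \<partial>M)"
  proof (rule integral_mono)
    show "integrable M (\<lambda>\<omega>. g \<omega> * h' \<omega>)"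
    proof (rule integrable_bounded[where B = "B * (C + 1 / n)"])
      fix \<omega> assume "\<omega> \<in> space M"
      with g[OF this] h[OF this] h'_bounds[of \<omega>] show "\<bar>g \<omega> * h' \<omega>\<bar> \<le> B * (C + 1 / n)"
        by (auto simp: abs_mult intro!: mult_mono)
    qed simp
    show "integrable M (\<lambda>\<omega>. g \<omega> * h \<omega> + B / n)"
      using int_gh by simp
    show "g \<omega> * h' \<omega> \<le> g \<omega> * h \<omega> + B / n" if "\<omega> \<in> space M" for \<omega>
    proof -
      have "g \<omega> * h' \<omega> \<le> g \<omega> * (h \<omega> + 1 / n)"
        using g[OF that] h'_bounds(2) by (intro mult_left_mono) auto
      also have "\<dots> \<le> g \<omega> * h \<omega> + B / n"
        using g[OF that] \<open>0 < n\<close> by (simp add: algebra_simps divide_right_mono)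
      finally show ?thesis .
    qed
  qed
  also have "\<dots> = (\<integral>\<omega>. g \<omega> * h \<omega> \<partial>M) + B / n"
    using int_gh by (simp add: prob_space)
  finally show ?thesis .
qed

lemma integral_mult_indicator_le:
  assumes "g \<in> borel_measurable F" "h \<in> borel_measurable F"
    and "\<And>\<omega>. \<omega> \<in> space M \<Longrightarrow> 0 \<le> g \<omega> \<and> g \<omega> \<le> B"
    and "\<And>\<omega>. \<omega> \<in> space M \<Longrightarrow> 0 \<le> h \<omega> \<and> h \<omega> \<le> C"
  shows "(\<integral>\<omega>. g \<omega> * indicator {x \<in> space M. X x \<le> h x} \<omega> \<partial>M) \<le> (\<integral>\<omega>. g \<omega> * h \<omega> \<partial>M)"
proof (rule field_le_epsilon)
  fix e :: real assume "0 < e"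
  obtain n :: nat where "max (B / e) 1 < n"
    using reals_Archimedean2 by blast
  then have "0 < real n" and "B / n \<le> e"
    using \<open>0 < e\<close> by (auto simp: field_simps)
  with integral_mult_indicator_le_add_divide[OF assms]
  show "(\<integral>\<omega>. g \<omega> * indicator {x \<in> space M. X x \<le> h x} \<omega> \<partial>M) \<le> (\<integral>\<omega>. g \<omega> * h \<omega> \<partial>M) + e"
    by (meson add_left_mono order_trans)
qed

lemma expectation_below_threshold_le:
  assumes [measurable]: "h \<in> borel_measurable F"
    and h: "\<And>\<omega>. \<omega> \<in> space M \<Longrightarrow> 0 \<le> h \<omega> \<and> h \<omega> \<le> C"
  shows "(\<integral>\<omega>. (if X \<omega> \<le> h \<omega> then 1 else 0 :: real) \<partial>M) \<le> (\<integral>\<omega>. h \<omega> \<partial>M)"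
proof -
  have "(\<integral>\<omega>. (if X \<omega> \<le> h \<omega> then 1 else 0 :: real) \<partial>M) = (\<integral>\<omega>. 1 * indicator {x \<in> space M. X x \<le> h x} \<omega> \<partial>M)"
    by (rule Bochner_Integration.integral_cong) (auto simp: indicator_def)
  also have "\<dots> \<le> (\<integral>\<omega>. 1 * h \<omega> \<partial>M)"
    by (rule integral_mult_indicator_le[where B = 1, OF _ _ _ h]) auto
  finally show ?thesis by simp
qed

text \<open>With weight g = al / (1 - lam), one has al = g - g lam, and E[g 1{X <= lam}] <= E[g lam].\<close>

lemma expectation_below_threshold_le_weighted_noncandidates:
  assumes [measurable]: "al \<in> borel_measurable F" "lam \<in> borel_measurable F"
    and bounds: "\<And>\<omega>. \<omega> \<in> space M \<Longrightarrow>
      0 \<le> al \<omega> \<and> al \<omega> \<le> lam \<omega> \<and> lam \<omega> < 1 \<and> al \<omega> / (1 - lam \<omega>) \<le> B"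
  shows "(\<integral>\<omega>. (if X \<omega> \<le> al \<omega> then 1 else 0 :: real) \<partial>M)
    \<le> (\<integral>\<omega>. al \<omega> / (1 - lam \<omega>) * (if lam \<omega> < X \<omega> then 1 else 0) \<partial>M)"
proof -
  define g where "g \<omega> = al \<omega> / (1 - lam \<omega>)" for \<omega>
  have [measurable]: "g \<in> borel_measurable F"
    unfolding g_def by measurable
  then have [measurable]: "g \<in> borel_measurable M" "lam \<in> borel_measurable M"
    by (auto intro: measurable_from_F)
  have g: "0 \<le> g \<omega> \<and> g \<omega> \<le> B" and lam: "0 \<le> lam \<omega> \<and> lam \<omega> \<le> 1" if "\<omega> \<in> space M" for \<omega>
    using bounds[OF that] by (auto simp: g_def)
  have al_eq: "al \<omega> = g \<omega> - g \<omega> * lam \<omega>" if "\<omega> \<in> space M" for \<omega>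
  proof -
    have "al \<omega> = g \<omega> * (1 - lam \<omega>)"
      using bounds[OF that] by (simp add: g_def)
    then show ?thesis by (simp add: algebra_simps)
  qed
  have int_g: "integrable M g"
    by (rule integrable_bounded[where B = B]) (use g in auto)
  have int_g_lam: "integrable M (\<lambda>\<omega>. g \<omega> * lam \<omega>)"
  proof (rule integrable_bounded[where B = B])
    fix \<omega> assume "\<omega> \<in> space M"
    with g[OF this] lam[OF this] show "\<bar>g \<omega> * lam \<omega>\<bar> \<le> B"
      by (auto simp: abs_mult intro: order_trans[OF mult_right_le_one_le])
  qed simp
  have int_g_ind: "integrable M (\<lambda>\<omega>. g \<omega> * indicator {x \<in> space M. X x \<le> lam x} \<omega>)"
    using int_g by (rule integrable_real_mult_indicator[rotated]) measurable
  have "(\<integral>\<omega>. (if X \<omega> \<le> al \<omega> then 1 else 0 :: real) \<partial>M) \<le> (\<integral>\<omega>. al \<omega> \<partial>M)"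
    by (rule expectation_below_threshold_le[where C = 1]) (use bounds in force)+
  also have "\<dots> = (\<integral>\<omega>. g \<omega> \<partial>M) - (\<integral>\<omega>. g \<omega> * lam \<omega> \<partial>M)"
    using int_g int_g_lam al_eq by (simp cong: Bochner_Integration.integral_cong)
  also have "\<dots> \<le> (\<integral>\<omega>. g \<omega> \<partial>M) - (\<integral>\<omega>. g \<omega> * indicator {x \<in> space M. X x \<le> lam x} \<omega> \<partial>M)"
    using integral_mult_indicator_le[OF _ _ g lam] by simp
  also have "\<dots> = (\<integral>\<omega>. g \<omega> - g \<omega> * indicator {x \<in> space M. X x \<le> lam x} \<omega> \<partial>M)"
    by (rule Bochner_Integration.integral_diff[symmetric, OF int_g int_g_ind])
  also have "\<dots> = (\<integral>\<omega>. al \<omega> / (1 - lam \<omega>) * (if lam \<omega> < X \<omega> then 1 else 0) \<partial>M)"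
    by (rule Bochner_Integration.integral_cong) (auto simp: g_def indicator_def)
  finally show ?thesis .
qed

end

section \<open>Conflict sets and filtrations\<close>

lemma conflict_subset: "conflict E L t \<subseteq> {1..t - 1}"
  unfolding conflict_def by auto

lemma nonconf_subset: "nonconf E L t \<subseteq> {1..t - 1}"
  unfolding nonconf_def by auto

lemma finite_conflict [simp]: "finite (conflict E L t)"
  using finite_subset[OF conflict_subset] by blast

lemma finite_nonconf [simp]: "finite (nonconf E L t)"
  using finite_subset[OF nonconf_subset] by blast

lemma nonconf_subset_decided: "nonconf E L t \<subseteq> {i \<in> {1..t}. E i \<le> t}"
  unfolding nonconf_def conflict_def by auto

lemma atLeastAtMost_eq_nonconf_Un_conflict:
  "1 \<le> t \<Longrightarrow> {1..t} = nonconf E L t \<union> (conflict E L t \<union> {t})"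
  using conflict_subset[of E L t] unfolding nonconf_def by fastforce

lemma nonconf_Int_conflict: "nonconf E L t \<inter> (conflict E L t \<union> {t}) = {}"
  unfolding nonconf_def by auto

lemma diff_lag_mono:
  assumes lag: "\<And>t. t \<ge> 1 \<Longrightarrow> L (Suc t) \<le> L t + 1" and "1 \<le> i" "i \<le> j"
  shows "i - L i \<le> j - L j"
  using \<open>i \<le> j\<close>
proof (induction j rule: dec_induct)
  case (step k)
  then show ?case using lag[of k] \<open>1 \<le> i\<close> by linarith
qed simp

lemma nonconf_mono:
  assumes "\<And>t. t \<ge> 1 \<Longrightarrow> L (Suc t) \<le> L t + 1" and "1 \<le> i" "i \<le> j"
  shows "nonconf E L i \<subseteq> nonconf E L j"
  using diff_lag_mono[of L i j, OF assms] \<open>i \<le> j\<close> unfolding nonconf_def conflict_def by auto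

lemma space_gen_sigma [simp]: "space (gen_sigma \<Omega> Fs) = \<Omega>"
  unfolding gen_sigma_def by (simp add: space_measure_of_conv)

lemma sets_gen_sigma:
  "sets (gen_sigma \<Omega> Fs) = sigma_sets \<Omega> {f -` A \<inter> \<Omega> | f A. f \<in> Fs \<and> A \<in> sets (borel :: real measure)}"
  unfolding gen_sigma_def by (subst sets_measure_of) auto

lemma subalgebra_gen_sigma_mono: "Fs \<subseteq> Gs \<Longrightarrow> subalgebra (gen_sigma \<Omega> Gs) (gen_sigma \<Omega> Fs)"
  unfolding subalgebra_def sets_gen_sigma by (intro conjI sigma_sets_mono') auto

lemma subalgebra_gen_sigma:
  assumes "\<And>f. f \<in> Fs \<Longrightarrow> f \<in> borel_measurable M"
  shows "subalgebra M (gen_sigma (space M) Fs)"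
  unfolding subalgebra_def space_gen_sigma sets_gen_sigma
proof (intro conjI refl sets.sigma_sets_subset)
  show "{f -` A \<inter> space M | f A. f \<in> Fs \<and> A \<in> sets borel} \<subseteq> sets M"
    using assms measurable_sets by blast
qed

lemma measurable_Rej [measurable]:
  "P i \<in> borel_measurable M \<Longrightarrow> al i \<in> borel_measurable M \<Longrightarrow> Rej P al i \<in> borel_measurable M"
  unfolding Rej_def[abs_def] by measurable

lemma measurable_Cand [measurable]:
  "P i \<in> borel_measurable M \<Longrightarrow> lam i \<in> borel_measurable M \<Longrightarrow> Cand P lam i \<in> borel_measurable M"
  unfolding Cand_def[abs_def] by measurable

lemma subalgebra_lord_filt:
  assumes "\<And>t. P t \<in> borel_measurable M" and "\<And>j. j \<in> nonconf E L t \<Longrightarrow> al j \<in> borel_measurable M"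
  shows "subalgebra M (lord_filt M P al E L t)"
  unfolding lord_filt_def using assms by (intro subalgebra_gen_sigma) auto

lemma subalgebra_saffron_filt:
  assumes "\<And>t. P t \<in> borel_measurable M"
    and "\<And>j. j \<in> nonconf E L t \<Longrightarrow> al j \<in> borel_measurable M"
    and "\<And>j. j \<in> nonconf E L t \<Longrightarrow> lam j \<in> borel_measurable M"
  shows "subalgebra M (saffron_filt M P al lam E L t)"
  unfolding saffron_filt_def using assms by (intro subalgebra_gen_sigma) auto

lemma subalgebra_lord_filt_mono:
  assumes "\<And>t. t \<ge> 1 \<Longrightarrow> L (Suc t) \<le> L t + 1" and "1 \<le> i" "i \<le> j"
  shows "subalgebra (lord_filt M P al E L j) (lord_filt M P al E L i)"
  unfolding lord_filt_def using nonconf_mono[of L i j E, OF assms]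
  by (intro subalgebra_gen_sigma_mono) blast

lemma subalgebra_saffron_filt_mono:
  assumes "\<And>t. t \<ge> 1 \<Longrightarrow> L (Suc t) \<le> L t + 1" and "1 \<le> i" "i \<le> j"
  shows "subalgebra (saffron_filt M P al lam E L j) (saffron_filt M P al lam E L i)"
  unfolding saffron_filt_def using nonconf_mono[of L i j E, OF assms]
  by (intro subalgebra_gen_sigma_mono) blast

text \<open>Predictability: the filtration at time t only involves tests j < t.\<close>

lemma LORD_star_measurable:
  assumes LORD: "is_LORD_star M a P al E L" and P: "\<And>t. P t \<in> borel_measurable M"
  shows "1 \<le> t \<Longrightarrow> al t \<in> borel_measurable M"
proof (induction t rule: less_induct)
  case (less t)
  have "subalgebra M (lord_filt M P al E L t)"
    using P less.IH nonconf_subset[of E L t] by (intro subalgebra_lord_filt) force+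
  moreover have "al t \<in> borel_measurable (lord_filt M P al E L t)"
    using LORD less.prems unfolding is_LORD_star_def by blast
  ultimately show ?case by (rule measurable_from_subalg)
qed

lemma SAFFRON_star_measurable:
  assumes SAFFRON: "is_SAFFRON_star M a P al lam E L" and P: "\<And>t. P t \<in> borel_measurable M"
  shows "1 \<le> t \<Longrightarrow> al t \<in> borel_measurable M \<and> lam t \<in> borel_measurable M"
proof (induction t rule: less_induct)
  case (less t)
  have "subalgebra M (saffron_filt M P al lam E L t)"
    using P less.IH nonconf_subset[of E L t] by (intro subalgebra_saffron_filt) force+
  moreover have "al t \<in> borel_measurable (saffron_filt M P al lam E L t)"
    "lam t \<in> borel_measurable (saffron_filt M P al lam E L t)"
    using SAFFRON less.prems unfolding is_SAFFRON_star_def by blast+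
  ultimately show ?case using measurable_from_subalg by blast
qed

lemma superuniform_pvalue_if_cond_superuniform:
  assumes "prob_space M" and "\<And>t. P t \<in> borel_measurable M" and "subalgebra M (F (E i))"
    and "cond_superuniform M H0 P E F" and "i \<in> H0" "1 \<le> i"
  shows "superuniform_pvalue M (F (E i)) (P i)"
proof -
  interpret prob_space M by fact
  show ?thesis
    using assms unfolding cond_superuniform_def
    by unfold_locales auto
qed

section \<open>Rejection counts and the mFDR\<close>

lemma Rej_nonneg: "0 \<le> Rej P al i \<omega>" and Rej_le_one: "Rej P al i \<omega> \<le> 1"
  by (simp_all add: Rej_def)

lemma card_rejset_Int:
  "real (card (rejset P al E t \<omega> \<inter> S)) = (\<Sum>i\<in>{i \<in> {1..t}. E i \<le> t \<and> i \<in> S}. Rej P al i \<omega>)"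
proof -
  have "rejset P al E t \<omega> \<inter> S = {i \<in> {i \<in> {1..t}. E i \<le> t \<and> i \<in> S}. P i \<omega> \<le> al i \<omega>}"
    unfolding rejset_def by auto
  then show ?thesis
    by (simp add: Rej_def sum.inter_filter[symmetric])
qed

lemma card_rejset: "real (card (rejset P al E t \<omega>)) = (\<Sum>i\<in>{i \<in> {1..t}. E i \<le> t}. Rej P al i \<omega>)"
  using card_rejset_Int[where S = UNIV] by simp

lemma card_rejset_le: "card (rejset P al E t \<omega>) \<le> t"
proof -
  have "card (rejset P al E t \<omega>) \<le> card {1..t}"
    by (rule card_mono) (auto simp: rejset_def)
  then show ?thesis by simp
qed

lemma sum_nonconf_Rej_le_card_rejset:
  "(\<Sum>j\<in>nonconf E L t. Rej P al j \<omega>) \<le> real (card (rejset P al E t \<omega>))"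
  unfolding card_rejset by (rule sum_mono2[OF _ nonconf_subset_decided]) (auto simp: Rej_nonneg)

lemma max_sum_nonconf_Rej_le:
  assumes "1 \<le> t"
  shows "max (\<Sum>j\<in>nonconf E L t. Rej P al j \<omega>) 1 \<le> real t"
proof -
  have "(\<Sum>j\<in>nonconf E L t. Rej P al j \<omega>) \<le> real (card (nonconf E L t))"
    using sum_mono[of "nonconf E L t" "\<lambda>j. Rej P al j \<omega>" "\<lambda>_. 1"] by (simp add: Rej_le_one)
  also have "\<dots> \<le> real t"
    using card_mono[of "{1..t - 1}" "nonconf E L t"] nonconf_subset[of E L t] by simp
  finally show ?thesis using assms by simp
qed

lemma max_sum_nonconf_Rej_le_card_rejset:
  "0 \<le> a \<Longrightarrow> a * max (\<Sum>j\<in>nonconf E L t. Rej P al j \<omega>) 1 \<le> a * max (real (card (rejset P al E t \<omega>))) 1"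
  by (intro mult_left_mono max.mono sum_nonconf_Rej_le_card_rejset) auto

lemma integrable_max_card_rejset:
  assumes "prob_space M" and "\<And>i. 1 \<le> i \<Longrightarrow> Rej P al i \<in> borel_measurable M"
  shows "integrable M (\<lambda>\<omega>. max (real (card (rejset P al E t \<omega>))) 1)"
proof -
  interpret prob_space M by fact
  show ?thesis
  proof (rule integrable_bounded[where B = "real t + 1"])
    show "(\<lambda>\<omega>. max (real (card (rejset P al E t \<omega>))) 1) \<in> borel_measurable M"
      unfolding card_rejset using assms(2) by measurable
    show "\<bar>max (real (card (rejset P al E t \<omega>))) 1\<bar> \<le> real t + 1" for \<omega>
      using card_rejset_le[of P al E t \<omega>] by simp
  qed
qed

text \<open>G i is the alpha-wealth charged to test i: al i for LORD*, and al i / (1 - lam i) when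
  P i > lam i for SAFFRON*.\<close>

lemma mFDR_le_if_budget:
  assumes "prob_space M" and Rej: "\<And>i. 1 \<le> i \<Longrightarrow> Rej P al i \<in> borel_measurable M"
    and G: "\<And>i. i \<in> {1..t} \<Longrightarrow> G i \<in> borel_measurable M"
    and G_nonneg: "\<And>i \<omega>. i \<in> {1..t} \<Longrightarrow> \<omega> \<in> space M \<Longrightarrow> 0 \<le> G i \<omega>"
    and null: "\<And>i. i \<in> H0 \<Longrightarrow> i \<in> {1..t} \<Longrightarrow> (\<integral>\<omega>. Rej P al i \<omega> \<partial>M) \<le> (\<integral>\<omega>. G i \<omega> \<partial>M)"
    and budget: "\<And>\<omega>. \<omega> \<in> space M \<Longrightarrow>
      (\<Sum>i=1..t. G i \<omega>) \<le> a * max (real (card (rejset P al E t \<omega>))) 1"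
  shows "mFDR M H0 P al E t \<le> a"
proof -
  interpret prob_space M by fact
  define D where "D \<omega> = max (real (card (rejset P al E t \<omega>))) 1" for \<omega>
  define I where "I = {i \<in> {1..t}. E i \<le> t \<and> i \<in> H0}"
  have int_D: "integrable M D"
    unfolding D_def using \<open>prob_space M\<close> Rej by (rule integrable_max_card_rejset)
  have budget_D: "(\<Sum>i=1..t. G i \<omega>) \<le> a * D \<omega>" if "\<omega> \<in> space M" for \<omega>
    using budget[OF that] by (simp add: D_def)
  have int_G: "integrable M (G i)" if "i \<in> {1..t}" for i
  proof (rule Bochner_Integration.integrable_bound[OF integrable_mult_right[OF int_D, of a] G[OF that]])
    show "AE \<omega> in M. norm (G i \<omega>) \<le> norm (a * D \<omega>)"
    proof (rule AE_I2)
      fix \<omega> assume \<omega>: "\<omega> \<in> space M"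
      have "G i \<omega> \<le> (\<Sum>i=1..t. G i \<omega>)"
        using that G_nonneg[OF _ \<omega>] by (intro member_le_sum) auto
      with budget_D[OF \<omega>] G_nonneg[OF that \<omega>] show "norm (G i \<omega>) \<le> norm (a * D \<omega>)"
        by simp
    qed
  qed
  have "(\<integral>\<omega>. real (card (rejset P al E t \<omega> \<inter> H0)) \<partial>M) = (\<Sum>i\<in>I. \<integral>\<omega>. Rej P al i \<omega> \<partial>M)"
    unfolding card_rejset_Int I_def[symmetric]
    by (rule Bochner_Integration.integral_sum)
      (auto simp: I_def Rej_nonneg Rej_le_one intro!: integrable_bounded[where B = 1] Rej)
  also have "\<dots> \<le> (\<Sum>i\<in>I. \<integral>\<omega>. G i \<omega> \<partial>M)"
    by (rule sum_mono) (auto simp: I_def intro: null)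
  also have "\<dots> \<le> (\<Sum>i=1..t. \<integral>\<omega>. G i \<omega> \<partial>M)"
    by (rule sum_mono2) (auto simp: I_def intro!: integral_nonneg_AE AE_I2 G_nonneg)
  also have "\<dots> = (\<integral>\<omega>. (\<Sum>i=1..t. G i \<omega>) \<partial>M)"
    by (rule Bochner_Integration.integral_sum[symmetric]) (rule int_G)
  also have "\<dots> \<le> (\<integral>\<omega>. a * D \<omega> \<partial>M)"
    using budget_D int_D int_G by (intro integral_mono) auto
  also have "\<dots> = a * (\<integral>\<omega>. D \<omega> \<partial>M)"
    by simp
  finally have "(\<integral>\<omega>. real (card (rejset P al E t \<omega> \<inter> H0)) \<partial>M) \<le> a * (\<integral>\<omega>. D \<omega> \<partial>M)" .
  moreover have "1 \<le> (\<integral>\<omega>. D \<omega> \<partial>M)"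
  proof -
    have "(\<integral>\<omega>. 1 \<partial>M) \<le> (\<integral>\<omega>. D \<omega> \<partial>M)"
      by (rule integral_mono[OF integrable_const int_D]) (simp add: D_def)
    then show ?thesis by (simp add: prob_space)
  qed
  ultimately show ?thesis
    unfolding mFDR_def D_def[symmetric] by (simp add: divide_le_eq)
qed

section \<open>LORD* and SAFFRON*\<close>

lemma subalgebra_lord_filt_if_LORD_star:
  assumes "is_LORD_star M a P al E L" and "\<And>t. P t \<in> borel_measurable M"
  shows "subalgebra M (lord_filt M P al E L t)"
proof (rule subalgebra_lord_filt[OF assms(2)])
  fix j assume "j \<in> nonconf E L t"
  then have "1 \<le> j" using nonconf_subset by fastforce
  then show "al j \<in> borel_measurable M" by (rule LORD_star_measurable[OF assms])
qed

lemma LORD_star_level_nonneg: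
  assumes LORD: "is_LORD_star M a P al E L" and "\<omega> \<in> space M"
  shows "0 \<le> a"
proof -
  have "0 \<le> al 1 \<omega>" "(\<Sum>j=1..1. al j \<omega>) \<le> a * max (\<Sum>j\<in>nonconf E L 1. Rej P al j \<omega>) 1"
    using LORD \<open>\<omega> \<in> space M\<close> unfolding is_LORD_star_def by blast+
  then have "0 \<le> a * max (\<Sum>j\<in>nonconf E L 1. Rej P al j \<omega>) 1"
    by simp
  moreover have "0 < max (\<Sum>j\<in>nonconf E L 1. Rej P al j \<omega>) 1"
    by simp
  ultimately show ?thesis
    by (simp add: zero_le_mult_iff)
qed

lemma LORD_star_alpha_le:
  assumes LORD: "is_LORD_star M a P al E L" and "0 \<le> a" "1 \<le> i" "\<omega> \<in> space M"
  shows "al i \<omega> \<le> a * real i"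
proof -
  have "al i \<omega> \<le> (\<Sum>j=1..i. al j \<omega>)"
    using LORD \<open>1 \<le> i\<close> \<open>\<omega> \<in> space M\<close> unfolding is_LORD_star_def
    by (intro member_le_sum) auto
  also have "\<dots> \<le> a * max (\<Sum>j\<in>nonconf E L i. Rej P al j \<omega>) 1"
    using LORD \<open>1 \<le> i\<close> \<open>\<omega> \<in> space M\<close> unfolding is_LORD_star_def by blast
  also have "\<dots> \<le> a * real i"
    using max_sum_nonconf_Rej_le[OF \<open>1 \<le> i\<close>] \<open>0 \<le> a\<close> by (rule mult_left_mono)
  finally show ?thesis .
qed

lemma LORD_star_mFDR_le:
  assumes "prob_space M" and P: "\<And>t. P t \<in> borel_measurable M"
    and E_ge: "\<And>t. t \<ge> 1 \<Longrightarrow> t \<le> E t" and lag: "\<And>t. t \<ge> 1 \<Longrightarrow> L (Suc t) \<le> L t + 1"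
    and LORD: "is_LORD_star M a P al E L"
    and superuniform: "cond_superuniform M H0 P E (lord_filt M P al E L)" and "1 \<le> t"
  shows "mFDR M H0 P al E t \<le> a"
proof -
  interpret prob_space M by fact
  have "0 \<le> a"
    using LORD_star_level_nonneg[OF LORD] not_empty by blast
  have al_M: "al i \<in> borel_measurable M" if "1 \<le> i" for i
    using LORD_star_measurable[OF LORD P that] .
  have al_bounds: "0 \<le> al i \<omega> \<and> al i \<omega> \<le> a * real i" if "1 \<le> i" "\<omega> \<in> space M" for i \<omega>
    using LORD LORD_star_alpha_le[OF LORD \<open>0 \<le> a\<close> that] that unfolding is_LORD_star_def by blast
  show ?thesis
  proof (rule mFDR_le_if_budget[where G = al, OF \<open>prob_space M\<close>])
    fix i assume "i \<in> H0" "i \<in> {1..t}"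
    then have "1 \<le> i" by simp
    let ?F = "lord_filt M P al E L (E i)"
    interpret superuniform_pvalue M ?F "P i"
      using superuniform_pvalue_if_cond_superuniform[OF \<open>prob_space M\<close> P
          subalgebra_lord_filt_if_LORD_star[OF LORD P] superuniform \<open>i \<in> H0\<close> \<open>1 \<le> i\<close>] .
    have "al i \<in> borel_measurable (lord_filt M P al E L i)"
      using LORD \<open>1 \<le> i\<close> unfolding is_LORD_star_def by blast
    moreover have "subalgebra ?F (lord_filt M P al E L i)"
      using lag \<open>1 \<le> i\<close> E_ge[OF \<open>1 \<le> i\<close>] by (rule subalgebra_lord_filt_mono)
    ultimately have "al i \<in> borel_measurable ?F"
      using measurable_from_subalg by blast
    from expectation_below_threshold_le[OF this al_bounds[OF \<open>1 \<le> i\<close>]]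
    show "(\<integral>\<omega>. Rej P al i \<omega> \<partial>M) \<le> (\<integral>\<omega>. al i \<omega> \<partial>M)"
      by (simp add: Rej_def)
  next
    fix \<omega> assume "\<omega> \<in> space M"
    then have "(\<Sum>i=1..t. al i \<omega>) \<le> a * max (\<Sum>j\<in>nonconf E L t. Rej P al j \<omega>) 1"
      using LORD \<open>1 \<le> t\<close> unfolding is_LORD_star_def by blast
    also have "\<dots> \<le> a * max (real (card (rejset P al E t \<omega>))) 1"
      using \<open>0 \<le> a\<close> by (rule max_sum_nonconf_Rej_le_card_rejset)
    finally show "(\<Sum>i=1..t. al i \<omega>) \<le> a * max (real (card (rejset P al E t \<omega>))) 1" .
  qed (use al_M al_bounds P in auto)
qed

lemma subalgebra_saffron_filt_if_SAFFRON_star: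
  assumes "is_SAFFRON_star M a P al lam E L" and "\<And>t. P t \<in> borel_measurable M"
  shows "subalgebra M (saffron_filt M P al lam E L t)"
proof (rule subalgebra_saffron_filt[OF assms(2)])
  fix j assume "j \<in> nonconf E L t"
  then have "1 \<le> j" using nonconf_subset by fastforce
  then show "al j \<in> borel_measurable M" "lam j \<in> borel_measurable M"
    using SAFFRON_star_measurable[OF assms] by blast+
qed

lemma SAFFRON_star_weight_nonneg:
  assumes "is_SAFFRON_star M a P al lam E L" and "1 \<le> j" "\<omega> \<in> space M"
  shows "0 \<le> al j \<omega> / (1 - lam j \<omega>)"
  using assms unfolding is_SAFFRON_star_def by (simp add: less_imp_le)

lemma SAFFRON_star_weight_le_budget:
  assumes SAFFRON: "is_SAFFRON_star M a P al lam E L" and "1 \<le> i" "\<omega> \<in> space M"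
  shows "al i \<omega> / (1 - lam i \<omega>) \<le> a * max (\<Sum>j\<in>nonconf E L i. Rej P al j \<omega>) 1"
proof -
  have weight_nonneg: "0 \<le> al j \<omega> / (1 - lam j \<omega>)" if "j \<in> nonconf E L i \<union> conflict E L i \<union> {i}" for j
    using that nonconf_subset[of E L i] conflict_subset[of E L i] \<open>1 \<le> i\<close>
    by (intro SAFFRON_star_weight_nonneg[OF SAFFRON _ \<open>\<omega> \<in> space M\<close>]) auto
  have "al i \<omega> / (1 - lam i \<omega>) \<le> (\<Sum>j\<in>conflict E L i \<union> {i}. al j \<omega> / (1 - lam j \<omega>))"
    using weight_nonneg by (intro member_le_sum) auto
  also have "\<dots> \<le> (\<Sum>j\<in>nonconf E L i. al j \<omega> / (1 - lam j \<omega>) * (if P j \<omega> > lam j \<omega> then 1 else 0))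
      + (\<Sum>j\<in>conflict E L i \<union> {i}. al j \<omega> / (1 - lam j \<omega>))"
    using weight_nonneg by (intro le_add_same_cancel2[THEN iffD2] sum_nonneg) auto
  also have "\<dots> \<le> a * max (\<Sum>j\<in>nonconf E L i. Rej P al j \<omega>) 1"
    using SAFFRON \<open>1 \<le> i\<close> \<open>\<omega> \<in> space M\<close> unfolding is_SAFFRON_star_def by blast
  finally show ?thesis .
qed

lemma SAFFRON_star_level_nonneg:
  assumes SAFFRON: "is_SAFFRON_star M a P al lam E L" and "\<omega> \<in> space M"
  shows "0 \<le> a"
proof -
  have "0 \<le> a * max (\<Sum>j\<in>nonconf E L 1. Rej P al j \<omega>) 1"
    using SAFFRON_star_weight_nonneg[OF SAFFRON _ \<open>\<omega> \<in> space M\<close>, of 1]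
      SAFFRON_star_weight_le_budget[OF SAFFRON _ \<open>\<omega> \<in> space M\<close>, of 1]
    by simp
  moreover have "0 < max (\<Sum>j\<in>nonconf E L 1. Rej P al j \<omega>) 1"
    by simp
  ultimately show ?thesis
    by (simp add: zero_le_mult_iff)
qed

lemma SAFFRON_star_weight_le:
  assumes "is_SAFFRON_star M a P al lam E L" and "0 \<le> a" "1 \<le> i" "\<omega> \<in> space M"
  shows "al i \<omega> / (1 - lam i \<omega>) \<le> a * real i"
  using SAFFRON_star_weight_le_budget[OF assms(1,3,4)]
    mult_left_mono[OF max_sum_nonconf_Rej_le[OF \<open>1 \<le> i\<close>] \<open>0 \<le> a\<close>]
  by (rule order_trans)

lemma SAFFRON_star_mFDR_le:
  assumes "prob_space M" and P: "\<And>t. P t \<in> borel_measurable M"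
    and E_ge: "\<And>t. t \<ge> 1 \<Longrightarrow> t \<le> E t" and lag: "\<And>t. t \<ge> 1 \<Longrightarrow> L (Suc t) \<le> L t + 1"
    and SAFFRON: "is_SAFFRON_star M a P al lam E L"
    and superuniform: "cond_superuniform M H0 P E (saffron_filt M P al lam E L)" and "1 \<le> t"
  shows "mFDR M H0 P al E t \<le> a"
proof -
  interpret prob_space M by fact
  define G where "G j \<omega> = al j \<omega> / (1 - lam j \<omega>) * (if P j \<omega> > lam j \<omega> then 1 else 0)" for j \<omega>
  have "0 \<le> a"
    using SAFFRON_star_level_nonneg[OF SAFFRON] not_empty by blast
  have measurable: "al i \<in> borel_measurable M" "lam i \<in> borel_measurable M" if "1 \<le> i" for i
    using SAFFRON_star_measurable[OF SAFFRON P that] by blast+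
  have bounds: "0 \<le> al i \<omega> \<and> al i \<omega> \<le> lam i \<omega> \<and> lam i \<omega> < 1 \<and> al i \<omega> / (1 - lam i \<omega>) \<le> a * real i"
    if "1 \<le> i" "\<omega> \<in> space M" for i \<omega>
    using SAFFRON that SAFFRON_star_weight_le[OF SAFFRON \<open>0 \<le> a\<close> that]
    unfolding is_SAFFRON_star_def by blast
  show ?thesis
  proof (rule mFDR_le_if_budget[where G = G, OF \<open>prob_space M\<close>])
    fix i assume "i \<in> H0" "i \<in> {1..t}"
    then have "1 \<le> i" by simp
    let ?F = "saffron_filt M P al lam E L (E i)"
    interpret superuniform_pvalue M ?F "P i"
      using superuniform_pvalue_if_cond_superuniform[OF \<open>prob_space M\<close> P
          subalgebra_saffron_filt_if_SAFFRON_star[OF SAFFRON P] superuniform \<open>i \<in> H0\<close> \<open>1 \<le> i\<close>] .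
    have "subalgebra ?F (saffron_filt M P al lam E L i)"
      using lag \<open>1 \<le> i\<close> E_ge[OF \<open>1 \<le> i\<close>] by (rule subalgebra_saffron_filt_mono)
    moreover have "al i \<in> borel_measurable (saffron_filt M P al lam E L i)"
      "lam i \<in> borel_measurable (saffron_filt M P al lam E L i)"
      using SAFFRON \<open>1 \<le> i\<close> unfolding is_SAFFRON_star_def by blast+
    ultimately have "al i \<in> borel_measurable ?F" "lam i \<in> borel_measurable ?F"
      using measurable_from_subalg by blast+
    from expectation_below_threshold_le_weighted_noncandidates[OF this bounds[OF \<open>1 \<le> i\<close>]]
    show "(\<integral>\<omega>. Rej P al i \<omega> \<partial>M) \<le> (\<integral>\<omega>. G i \<omega> \<partial>M)"
      by (simp add: Rej_def G_def)
  next
    fix \<omega> assume "\<omega> \<in> space M"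
    have "(\<Sum>i=1..t. G i \<omega>) = (\<Sum>j\<in>nonconf E L t. G j \<omega>) + (\<Sum>j\<in>conflict E L t \<union> {t}. G j \<omega>)"
      unfolding atLeastAtMost_eq_nonconf_Un_conflict[where E = E and L = L, OF \<open>1 \<le> t\<close>]
      by (rule sum.union_disjoint[OF _ _ nonconf_Int_conflict]) simp_all
    also have "\<dots> \<le> (\<Sum>j\<in>nonconf E L t. G j \<omega>) + (\<Sum>j\<in>conflict E L t \<union> {t}. al j \<omega> / (1 - lam j \<omega>))"
    proof (intro add_left_mono sum_mono)
      fix j assume "j \<in> conflict E L t \<union> {t}"
      then have "1 \<le> j"
        using conflict_subset[of E L t] \<open>1 \<le> t\<close> by auto
      with SAFFRON_star_weight_nonneg[OF SAFFRON this \<open>\<omega> \<in> space M\<close>]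
      show "G j \<omega> \<le> al j \<omega> / (1 - lam j \<omega>)"
        by (simp add: G_def)
    qed
    also have "\<dots> \<le> a * max (\<Sum>j\<in>nonconf E L t. Rej P al j \<omega>) 1"
      using SAFFRON \<open>1 \<le> t\<close> \<open>\<omega> \<in> space M\<close> unfolding is_SAFFRON_star_def G_def by blast
    also have "\<dots> \<le> a * max (real (card (rejset P al E t \<omega>))) 1"
      using \<open>0 \<le> a\<close> by (rule max_sum_nonconf_Rej_le_card_rejset)
    finally show "(\<Sum>i=1..t. G i \<omega>) \<le> a * max (real (card (rejset P al E t \<omega>))) 1" .
  next
    show "Rej P al i \<in> borel_measurable M" if "1 \<le> i" for i
      using P measurable(1)[OF that] by (rule measurable_Rej)
    show "G i \<in> borel_measurable M" if "i \<in> {1..t}" for i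
    proof -
      have [measurable]: "P i \<in> borel_measurable M" "al i \<in> borel_measurable M" "lam i \<in> borel_measurable M"
        using P measurable that by auto
      show ?thesis
        unfolding G_def by measurable
    qed
    show "0 \<le> G i \<omega>" if "i \<in> {1..t}" "\<omega> \<in> space M" for i \<omega>
      using SAFFRON_star_weight_nonneg[OF SAFFRON _ \<open>\<omega> \<in> space M\<close>, of i] that by (simp add: G_def)
  qed
qed

theorem theorem1:
  fixes M :: "'a measure" and a :: real and H0 :: "nat set"
    and P :: "nat \<Rightarrow> 'a \<Rightarrow> real" and E L :: "nat \<Rightarrow> nat"
  assumes "prob_space M"
    and "\<And>t. P t \<in> borel_measurable M"
    and "\<And>t. t \<ge> 1 \<Longrightarrow> t \<le> E t"
    and "\<And>t. t \<ge> 1 \<Longrightarrow> L (Suc t) \<le> L t + 1"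
  shows "(\<forall>al. is_LORD_star M a P al E L
            \<and> cond_superuniform M H0 P E (lord_filt M P al E L)
            \<longrightarrow> (\<forall>t\<ge>1. mFDR M H0 P al E t \<le> a))
       \<and> (\<forall>al lam. is_SAFFRON_star M a P al lam E L
            \<and> cond_superuniform M H0 P E (saffron_filt M P al lam E L)
            \<longrightarrow> (\<forall>t\<ge>1. mFDR M H0 P al E t \<le> a))"
  using LORD_star_mFDR_le[where M = M and P = P and E = E and L = L, OF assms]
    SAFFRON_star_mFDR_le[where M = M and P = P and E = E and L = L, OF assms] by blast

end
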